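(* Every Eulerian map is edge-wise Eulerian: if $X$ is a Peano continuum and $g:S^1\to X$ is a continuous surjection such that $g(A)\neq X$ for every closed $A\subsetneq S^1$, then $g^{-1}(x)$ is a singleton for every point $x$ lying in a free arc of $X$.
   Context: A Peano continuum is a compact, connected, locally connected metrizable space. A free arc of $X$ is an inclusion-maximal open subset of $X$ homeomorphic to $(0,1)$. *)

theory Defs
  imports "HOL-Analysis.Analysis"
begin

definition peano_continuum :: "'a topology \<Rightarrow> bool" where
  "peano_continuum X \<longleftrightarrow> compact_space X \<and> connected_space X \<and>
     locally_connected_space X \<and> metrizable_space X"

definition open_arc_in :: "'a topology \<Rightarrow> 'a set \<Rightarrow> bool" where
  "open_arc_in X U \<longleftrightarrow> openin X U \<and>
     (subtopology X U) homeomorphic_space (top_of_set {0<..<(1::real)})"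

definition free_arc :: "'a topology \<Rightarrow> 'a set \<Rightarrow> bool" where
  "free_arc X U \<longleftrightarrow> open_arc_in X U \<and> (\<forall>V. open_arc_in X V \<and> U \<subseteq> V \<longrightarrow> V = U)"

definition circle :: "complex set" where
  "circle = sphere 0 1"

end

theory Submission
  imports Defs
begin

text \<open>
  Lift \<open>g\<close> to the 1-periodic map \<open>F t = g (exp (2\<pi>it))\<close>. That \<open>g\<close> is Eulerian means that no
  open arc \<open>(\<alpha>, \<beta>)\<close> of a period is redundant: some value taken on it is missed by \<open>F\<close> on the
  complementary closed arc \<open>[\<beta>, \<alpha> + 1]\<close>.

  Let \<open>x = F \<sigma>\<close> lie in an open arc \<open>U\<close> with chart \<open>h : U \<cong> (0, 1)\<close>, and pick a band
  \<open>V = h\<^sup>-\<^sup>1 (a, b) \<ni> x\<close> whose closure stays inside \<open>U\<close>. Each point of \<open>F\<^sup>-\<^sup>1 V\<close> lies in an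
  excursion \<open>(l, r)\<close> of at most one period on which \<open>F\<close> stays in \<open>V\<close>, with \<open>h (F l), h (F r)\<close>
  boundary values of the band. These two values differ: otherwise, by the intermediate value
  theorem in the chart, the arc before the point of the excursion farthest from the boundary
  would be redundant. Now a second preimage of \<open>x\<close> in the same period either lies in the
  excursion of \<open>\<sigma>\<close>, and the arc between the two preimages is redundant, or it lies in a disjoint
  excursion, which sweeps the whole band and so makes the excursion of \<open>\<sigma>\<close> redundant.
\<close>

definition circle_param :: "real \<Rightarrow> complex" where
  "circle_param t = exp (2 * pi * \<i> * t)"

lemma circle_param_in_circle: "circle_param t \<in> circle"
  by (simp add: circle_param_def circle_def norm_exp_eq_Re)

lemma circle_param_add_int: "circle_param (t + of_int k) = circle_param t"
  unfolding circle_param_def exp_eq by (rule exI[of _ k]) (simp add: algebra_simps)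

lemma circle_param_eq_iff: "circle_param u = circle_param w \<longleftrightarrow> (\<exists>n::int. u = w + of_int n)"
proof
  assume "circle_param u = circle_param w"
  then obtain n :: int where "2 * pi * \<i> * u = 2 * pi * \<i> * w + of_int (2 * n) * pi * \<i>"
    unfolding circle_param_def exp_eq by blast
  then have "\<i> * complex_of_real (2 * pi * u) = \<i> * complex_of_real (2 * pi * (w + n))"
    by (simp add: algebra_simps)
  then have "u = w + n"
    by (metis mult_cancel_left of_real_eq_iff pi_neq_zero complex_i_not_zero zero_neq_numeral mult_eq_0_iff)
  then show "\<exists>n::int. u = w + of_int n" ..
qed (auto simp: circle_param_add_int)

lemma circle_param_surj: "z \<in> circle \<Longrightarrow> \<exists>t. circle_param t = z"
proof -
  assume "z \<in> circle"
  then have "norm z = 1" "z \<noteq> 0" by (auto simp: circle_def)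
  then have "circle_param (Arg z / (2 * pi)) = z"
    using Arg_eq[of z] by (simp add: circle_param_def mult.commute)
  then show ?thesis by blast
qed

lemma range_circle_param: "range circle_param = circle"
  using circle_param_in_circle circle_param_surj by blast

lemma continuous_map_circle_param: "continuous_map euclideanreal (top_of_set circle) circle_param"
  using circle_param_in_circle unfolding circle_param_def
  by (intro continuous_map_into_subtopology) (auto intro!: continuous_intros)

lemma ex_int_shift_into_period: "\<exists>k::int. (c::real) < t + of_int k \<and> t + of_int k \<le> c + 1"
  by (rule exI[of _ "\<lfloor>c + 1 - t\<rfloor>"]) linarith

lemma periodic_add_int:
  assumes "\<And>t. f (t + 1) = f t"
  shows "f (t + of_int k) = f t"
proof (induction k rule: int_induct[where k = 0])
  case (step1 i)
  then show ?case using assms[of "t + of_int i"] by (simp add: algebra_simps)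
next
  case (step2 i)
  then show ?case using assms[of "t + of_int (i - 1)"] by (simp add: algebra_simps)
qed simp

lemma closed_gap_around:
  fixes S :: "real set"
  assumes "closed S" "p \<in> S" "q \<in> S" "p \<le> \<rho>" "\<rho> \<le> q" "\<rho> \<notin> S"
  obtains l r where "p \<le> l" "l < \<rho>" "\<rho> < r" "r \<le> q" "l \<in> S" "r \<in> S" "{l<..<r} \<inter> S = {}"
proof
  let ?L = "S \<inter> {..\<rho>}" and ?R = "S \<inter> {\<rho>..}"
  have bdd: "bdd_above ?L" "bdd_below ?R" by (auto intro: bdd_aboveI bdd_belowI)
  have mem: "p \<in> ?L" "q \<in> ?R" using assms by auto
  have "Sup ?L \<in> ?L" "Inf ?R \<in> ?R"
    using closed_contains_Sup closed_contains_Inf mem bdd assms(1) by (metis closed_Int closed_atMost closed_atLeast empty_iff)+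
  then show "Sup ?L \<in> S" "Inf ?R \<in> S" "Sup ?L < \<rho>" "\<rho> < Inf ?R"
    using assms(6) by (auto simp: order.order_iff_strict)
  show "p \<le> Sup ?L" "Inf ?R \<le> q" using mem bdd by (auto intro: cSup_upper cInf_lower)
  show "{Sup ?L<..<Inf ?R} \<inter> S = {}"
    using bdd cSup_upper[of _ ?L] cInf_lower[of _ ?R] by (force simp: not_le)
qed

definition eulerian_lift :: "(real \<Rightarrow> 'a) \<Rightarrow> bool" where
  "eulerian_lift F \<longleftrightarrow> (\<forall>\<alpha> \<beta>. \<alpha> < \<beta> \<and> \<beta> \<le> \<alpha> + 1 \<longrightarrow> \<not> F ` {\<alpha><..<\<beta>} \<subseteq> F ` {\<beta>..\<alpha> + 1})"

lemma eulerian_lift_circle_param: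
  assumes eulerian: "\<And>A. closedin (top_of_set circle) A \<Longrightarrow> A \<subset> circle \<Longrightarrow> g ` A \<noteq> g ` circle"
  shows "eulerian_lift (g \<circ> circle_param)"
  unfolding eulerian_lift_def
proof (intro allI impI notI, elim conjE)
  fix \<alpha> \<beta> :: real
  assume "\<alpha> < \<beta>" "\<beta> \<le> \<alpha> + 1" and redundant: "(g \<circ> circle_param) ` {\<alpha><..<\<beta>} \<subseteq> (g \<circ> circle_param) ` {\<beta>..\<alpha> + 1}"
  define A where "A = circle_param ` {\<beta>..\<alpha> + 1}"
  have "compact A"
    unfolding A_def circle_param_def by (intro compact_continuous_image) (auto intro!: continuous_intros)
  moreover have A_circle: "A \<subseteq> circle"
    using circle_param_in_circle by (auto simp: A_def)
  ultimately have "closedin (top_of_set circle) A"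
    by (simp add: closed_subset compact_imp_closed)
  moreover have "circle_param ((\<alpha> + \<beta>) / 2) \<notin> A"
  proof
    assume "circle_param ((\<alpha> + \<beta>) / 2) \<in> A"
    then obtain w n where "w \<in> {\<beta>..\<alpha> + 1}" "(\<alpha> + \<beta>) / 2 = w + of_int n"
      by (auto simp: A_def circle_param_eq_iff)
    then have "-1 < (of_int n :: real)" "(of_int n :: real) < 0"
      using \<open>\<alpha> < \<beta>\<close> \<open>\<beta> \<le> \<alpha> + 1\<close> by auto
    then have "-1 < n" "n < 0" by simp_all
    then show False by simp
  qed
  then have "A \<subset> circle" using A_circle circle_param_in_circle by blast
  moreover have "g ` circle \<subseteq> g ` A"
  proof
    fix y assume "y \<in> g ` circle"
    then obtain t where y: "y = g (circle_param t)"
      using circle_param_surj by blast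
    obtain k :: int where k: "\<alpha> < t + k" "t + k \<le> \<alpha> + 1"
      using ex_int_shift_into_period by blast
    have "y = (g \<circ> circle_param) (t + k)"
      by (simp add: y circle_param_add_int)
    also have "\<dots> \<in> (g \<circ> circle_param) ` {\<beta>..\<alpha> + 1}"
      using k redundant by (cases "\<beta> \<le> t + k") auto
    finally show "y \<in> g ` A" by (auto simp: A_def)
  qed
  ultimately show False
    using eulerian A_circle by blast
qed

locale eulerian_lift_chart =
  fixes X :: "'a topology" and F :: "real \<Rightarrow> 'a" and U :: "'a set" and h :: "'a \<Rightarrow> real"
  assumes continuous_F: "continuous_map euclideanreal X F"
    and range_F: "range F = topspace X"
    and periodic_F: "F (t + 1) = F t"
    and eulerian_F: "eulerian_lift F"
    and Hausdorff_X: "Hausdorff_space X"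
    and openin_U: "openin X U"
    and chart: "homeomorphic_map (subtopology X U) (top_of_set {0<..<1}) h"
begin

lemma U_subset_topspace: "U \<subseteq> topspace X"
  using openin_U openin_subset by blast

lemma periodic_int_F: "F (t + of_int k) = F t"
  by (rule periodic_add_int) (rule periodic_F)

lemma F_in_topspace: "F t \<in> topspace X"
  using range_F by (metis rangeI)

lemma topspace_Int_U [simp]: "topspace X \<inter> U = U"
  using U_subset_topspace by auto

lemma not_redundant_arc:
  assumes "\<alpha> < \<beta>" "\<beta> \<le> \<alpha> + 1"
  shows "\<not> F ` {\<alpha><..<\<beta>} \<subseteq> F ` {\<beta>..\<alpha> + 1}"
  using eulerian_F assms unfolding eulerian_lift_def by blast

lemma inj_on_chart: "inj_on h U"
  using homeomorphic_imp_injective_map[OF chart] by simp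

lemma chart_image: "h ` U = {0<..<1}"
  using homeomorphic_imp_surjective_map[OF chart] by simp

lemma continuous_map_chart: "continuous_map (subtopology X U) euclideanreal h"
  using homeomorphic_imp_continuous_map[OF chart] continuous_map_in_subtopology by blast

lemma openin_chart_preimage: "openin X {y \<in> U. h y \<in> {a<..<b}}"
proof -
  have "openin (subtopology X U) {y \<in> topspace (subtopology X U). h y \<in> {a<..<b}}"
    using openin_continuous_map_preimage[OF continuous_map_chart, of "{a<..<b}"] by simp
  then show ?thesis
    using openin_trans_full openin_U by simp
qed

lemma closedin_chart_preimage:
  assumes "0 < a" "b < 1"
  shows "closedin X {y \<in> U. h y \<in> {a..b}}"
proof -
  let ?K = "{y \<in> U. h y \<in> {a..b}}"
  have "h ` ?K = {a..b}"
    using chart_image assms by fastforce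
  moreover have "{a..b} \<subseteq> {0<..<1}"
    using assms by auto
  then have "compactin (top_of_set {0<..<1}) {a..b}"
    by (simp add: compactin_subtopology)
  ultimately have "compactin (subtopology X U) ?K"
    using homeomorphic_map_compactness_eq[OF chart, of ?K] by auto
  then show ?thesis
    using compactin_imp_closedin Hausdorff_X compactin_subtopology by blast
qed

lemma continuous_on_chart_comp:
  assumes "F ` S \<subseteq> U"
  shows "continuous_on S (h \<circ> F)"
proof -
  have "continuous_map (top_of_set S) (subtopology X U) F"
    using assms continuous_map_from_subtopology[OF continuous_F]
    by (intro continuous_map_into_subtopology) auto
  then have "continuous_map (top_of_set S) euclideanreal (h \<circ> F)"
    using continuous_map_compose continuous_map_chart by blast
  then show ?thesis
    by simp
qed

lemma chart_IVT:
  assumes "c \<le> d" "F ` {c..d} \<subseteq> U" "p \<in> U" "h p \<in> closed_segment (h (F c)) (h (F d))"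
  shows "p \<in> F ` {c..d}"
proof -
  have "connected ((h \<circ> F) ` {c..d})"
    by (intro connected_continuous_image continuous_on_chart_comp assms(2) connected_Icc)
  then have "convex ((h \<circ> F) ` {c..d})"
    by (simp only: connected_convex_1)
  moreover have "h (F c) \<in> (h \<circ> F) ` {c..d}" "h (F d) \<in> (h \<circ> F) ` {c..d}"
    using assms(1) by (auto intro!: rev_image_eqI)
  ultimately have "closed_segment (h (F c)) (h (F d)) \<subseteq> (h \<circ> F) ` {c..d}"
    by (intro closed_segment_subset)
  then obtain z where z: "z \<in> {c..d}" "h p = h (F z)"
    using assms(4) by (metis comp_apply imageE subsetD)
  moreover have "F z \<in> U"
    using z assms(2) by blast
  ultimately have "p = F z"
    using inj_on_chart assms(3) by (simp add: inj_on_eq_iff)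
  then show ?thesis
    using z by blast
qed

definition band_excursion :: "real \<Rightarrow> real \<Rightarrow> real \<Rightarrow> real \<Rightarrow> bool" where
  "band_excursion a b l r \<longleftrightarrow> l < r \<and> r \<le> l + 1 \<and> F ` {l..r} \<subseteq> U \<and>
     (h \<circ> F) ` {l<..<r} \<subseteq> {a<..<b} \<and> h (F l) \<in> {a, b} \<and> h (F r) \<in> {a, b}"

lemma band_excursionD:
  assumes "band_excursion a b l r"
  shows "l < r" "r \<le> l + 1" "F ` {l..r} \<subseteq> U" "h (F l) \<in> {a, b}" "h (F r) \<in> {a, b}"
    and "t \<in> {l<..<r} \<Longrightarrow> h (F t) \<in> {a<..<b}"
  using assms unfolding band_excursion_def by (simp_all add: image_subset_iff)

lemma band_excursion_around:
  assumes "0 < a" "b < 1" "F \<rho> \<in> U" "h (F \<rho>) \<in> {a<..<b}"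
  obtains l r where "band_excursion a b l r" "l < \<rho>" "\<rho> < r"
proof -
  let ?V = "{y \<in> U. h y \<in> {a<..<b}}" and ?K = "{y \<in> U. h y \<in> {a..b}}"
  have "closedin euclideanreal {t \<in> topspace euclideanreal. F t \<in> topspace X - ?V}"
    using closedin_continuous_map_preimage[OF continuous_F closedin_diff[OF closedin_topspace openin_chart_preimage]] .
  then have closed_outside: "closed {t. F t \<notin> ?V}"
    by (simp add: F_in_topspace)
  have "closedin euclideanreal {t \<in> topspace euclideanreal. F t \<in> ?K}"
    using closedin_continuous_map_preimage[OF continuous_F closedin_chart_preimage[OF assms(1,2)]] .
  then have closed_K: "closed {t. F t \<in> ?K}"
    by simp
  have "a \<in> h ` U"
    using chart_image assms by auto
  then obtain y where y: "y \<in> U" "h y = a"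
    by blast
  then obtain s where s: "F s = y"
    using range_F U_subset_topspace by (metis rangeE subsetD)
  obtain k :: int where k: "\<rho> - 1 < s + k" "s + k \<le> \<rho>"
    using ex_int_shift_into_period[of "\<rho> - 1" s] by auto
  have "F (s + k) = y" "F (s + k + 1) = y"
    by (simp_all add: s periodic_F periodic_int_F)
  then have outside: "s + k \<in> {t. F t \<notin> ?V}" "s + k + 1 \<in> {t. F t \<notin> ?V}"
    using y by auto
  obtain l r where lr: "s + k \<le> l" "l < \<rho>" "\<rho> < r" "r \<le> s + k + 1"
    and ends: "l \<in> {t. F t \<notin> ?V}" "r \<in> {t. F t \<notin> ?V}"
    and gap: "{l<..<r} \<inter> {t. F t \<notin> ?V} = {}"
    by (rule closed_gap_around[OF closed_outside outside]) (use k assms(3,4) in auto)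
  have inside: "F ` {l<..<r} \<subseteq> ?V"
    using gap by blast
  then have "closure {l<..<r} \<subseteq> {t. F t \<in> ?K}"
    by (intro closure_minimal closed_K) auto
  then have "F ` {l..r} \<subseteq> ?K"
    using lr by auto
  moreover have "F l \<in> ?K" "F r \<in> ?K"
    using calculation lr by (simp_all add: image_subset_iff)
  ultimately have "band_excursion a b l r"
    using lr ends inside unfolding band_excursion_def by auto
  then show ?thesis
    using that lr by blast
qed

lemma band_excursion_crosses:
  assumes "band_excursion a b l r"
  shows "h (F l) \<noteq> h (F r)"
proof
  assume ends: "h (F l) = h (F r)"
  note exc = band_excursionD[OF assms]
  let ?c = "h (F l)"
  have "continuous_on {l..r} (\<lambda>t. h (F t))"
    using continuous_on_chart_comp[OF exc(3)] by (simp add: comp_def)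
  then have "continuous_on {l..r} (\<lambda>t. \<bar>h (F t) - ?c\<bar>)"
    by (intro continuous_intros)
  moreover have "{l..r} \<noteq> {}"
    using exc(1) by simp
  ultimately obtain \<mu> where "\<mu> \<in> {l..r}" and farthest: "\<forall>t\<in>{l..r}. \<bar>h (F t) - ?c\<bar> \<le> \<bar>h (F \<mu>) - ?c\<bar>"
    using continuous_attains_sup[OF compact_Icc] by blast
  have "(l + r) / 2 \<in> {l<..<r}"
    using exc(1) by simp
  then have "h (F ((l + r) / 2)) \<noteq> ?c"
    using exc(4,6) by fastforce
  then have "0 < \<bar>h (F \<mu>) - ?c\<bar>"
    using farthest \<open>(l + r) / 2 \<in> {l<..<r}\<close> by (smt (verit) greaterThanLessThan_iff atLeastAtMost_iff)
  then have \<mu>: "\<mu> \<in> {l<..<r}"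
    using \<open>\<mu> \<in> {l..r}\<close> ends by (cases "\<mu> = l \<or> \<mu> = r") auto
  have "F ` {l<..<\<mu>} \<subseteq> F ` {\<mu>..l + 1}"
  proof (rule image_subsetI)
    fix t assume t: "t \<in> {l<..<\<mu>}"
    then have "h (F t) \<in> {a<..<b}" "h (F \<mu>) \<in> {a<..<b}" "\<bar>h (F t) - ?c\<bar> \<le> \<bar>h (F \<mu>) - ?c\<bar>"
      using exc(6) farthest \<mu> by auto
    \<comment> \<open>all values on the excursion lie on the same side of the boundary value \<open>?c\<close>\<close>
    then have "h (F t) \<in> closed_segment (h (F \<mu>)) (h (F r))"
      using exc(4) ends by (auto simp: closed_segment_eq_real_ivl)
    moreover have "F ` {\<mu>..r} \<subseteq> U" "F t \<in> U"
      using exc(3) t \<mu> by auto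
    ultimately have "F t \<in> F ` {\<mu>..r}"
      using \<mu> by (intro chart_IVT) auto
    then show "F t \<in> F ` {\<mu>..l + 1}"
      using exc(2) by auto
  qed
  then show False
    using not_redundant_arc \<mu> exc(2) by simp
qed

lemma band_excursion_segment:
  assumes "band_excursion a b l r"
  shows "closed_segment (h (F l)) (h (F r)) = {a..b}"
proof -
  note exc = band_excursionD[OF assms]
  have "(l + r) / 2 \<in> {l<..<r}"
    using exc(1) by simp
  then have "a < b"
    using exc(6) by fastforce
  then show ?thesis
    using exc(4,5) band_excursion_crosses[OF assms] by (auto simp: closed_segment_eq_real_ivl)
qed

lemma band_excursion_avoids_boundary:
  assumes "band_excursion a b l r" "h (F t) \<in> {a, b}"
  shows "t \<notin> {l<..<r}"
proof
  assume "t \<in> {l<..<r}"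
  then have "h (F t) \<in> {a<..<b}"
    by (rule band_excursionD(6)[OF assms(1)])
  then show False
    using assms(2) by auto
qed

lemma inj_on_band_excursion:
  assumes exc: "band_excursion a b l r"
  shows "inj_on F {l<..<r}"
proof (rule linorder_inj_onI')
  fix \<alpha> \<beta> assume \<alpha>\<beta>: "\<alpha> \<in> {l<..<r}" "\<beta> \<in> {l<..<r}" "\<alpha> < \<beta>"
  note lr = band_excursionD[OF exc]
  show "F \<alpha> \<noteq> F \<beta>"
  proof
    assume "F \<alpha> = F \<beta>"
    have "F ` {\<alpha><..<\<beta>} \<subseteq> F ` {\<beta>..\<alpha> + 1}"
    proof (rule image_subsetI)
      fix t assume t: "t \<in> {\<alpha><..<\<beta>}"
      then have "F t \<in> U" "h (F t) \<in> {a<..<b}" "h (F \<alpha>) \<in> {a<..<b}"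
        using lr(3,6) \<alpha>\<beta> by auto
      \<comment> \<open>the ends of the excursion are the two distinct boundary values of the band\<close>
      then have "h (F t) \<in> closed_segment (h (F l)) (h (F \<alpha>))
          \<or> h (F t) \<in> closed_segment (h (F \<beta>)) (h (F r))"
        using lr(4,5) band_excursion_crosses[OF exc] \<open>F \<alpha> = F \<beta>\<close>
        by (cases "h (F t) \<le> h (F \<alpha>)") (auto simp: closed_segment_eq_real_ivl)
      then show "F t \<in> F ` {\<beta>..\<alpha> + 1}"
      proof
        assume "h (F t) \<in> closed_segment (h (F l)) (h (F \<alpha>))"
        then obtain z where "z \<in> {l..\<alpha>}" "F t = F z"
          using chart_IVT[of l \<alpha> "F t"] \<open>F t \<in> U\<close> lr(3) \<alpha>\<beta> by force
        moreover have "F z = F (z + 1)"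
          by (simp add: periodic_F)
        ultimately show ?thesis
          using \<alpha>\<beta> lr(2) by force
      next
        assume "h (F t) \<in> closed_segment (h (F \<beta>)) (h (F r))"
        then obtain z where "z \<in> {\<beta>..r}" "F t = F z"
          using chart_IVT[of \<beta> r "F t"] \<open>F t \<in> U\<close> lr(3) \<alpha>\<beta> by force
        then show ?thesis
          using \<alpha>\<beta> lr(2) by force
      qed
    qed
    then show False
      using not_redundant_arc \<alpha>\<beta> lr(2) by simp
  qed
qed

lemma disjoint_band_excursions:
  assumes exc: "band_excursion a b l r" and exc': "band_excursion a b l' r'" and "r \<le> l'"
  shows "l + 1 < r'"
proof (rule ccontr)
  assume "\<not> l + 1 < r'"
  note lr = band_excursionD[OF exc] and lr' = band_excursionD[OF exc']
  have "F ` {l<..<r} \<subseteq> F ` {r..l + 1}"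
  proof (rule image_subsetI)
    fix t assume "t \<in> {l<..<r}"
    then have "F t \<in> U" "h (F t) \<in> {a<..<b}"
      using lr(3,6) by auto
    moreover have "{a<..<b} \<subseteq> closed_segment (h (F l')) (h (F r'))"
      unfolding band_excursion_segment[OF exc'] by (simp add: greaterThanLessThan_subseteq_atLeastAtMost_iff)
    ultimately have "F t \<in> F ` {l'..r'}"
      using lr'(1,3) by (intro chart_IVT) auto
    then show "F t \<in> F ` {r..l + 1}"
      using \<open>r \<le> l'\<close> \<open>\<not> l + 1 < r'\<close> by auto
  qed
  then show False
    using not_redundant_arc lr(1,2) by simp
qed

theorem same_value_in_U_imp_int_shift:
  assumes "F \<sigma> \<in> U" "F \<tau> = F \<sigma>"
  shows "\<exists>k::int. \<tau> = \<sigma> + of_int k"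
proof -
  define v where "v = h (F \<sigma>)"
  define a where "a = v / 2"
  define b where "b = (1 + v) / 2"
  have "v \<in> {0<..<1}"
    using chart_image assms(1) v_def by auto
  then have ab: "0 < a" "b < 1" "v \<in> {a<..<b}"
    by (auto simp: a_def b_def)
  obtain l r where exc: "band_excursion a b l r" and \<sigma>: "\<sigma> \<in> {l<..<r}"
    using band_excursion_around[of a b \<sigma>] ab assms(1) v_def by (metis greaterThanLessThan_iff)
  obtain k :: int where k: "l < \<tau> + k" "\<tau> + k \<le> l + 1"
    using ex_int_shift_into_period by blast
  define \<tau>' where "\<tau>' = \<tau> + k"
  have "F \<tau>' = F \<sigma>"
    using assms(2) by (simp add: \<tau>'_def periodic_int_F)
  then obtain l' r' where exc': "band_excursion a b l' r'" and \<tau>': "\<tau>' \<in> {l'<..<r'}"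
    using band_excursion_around[of a b \<tau>'] ab assms(1) v_def by (metis greaterThanLessThan_iff)
  have "\<tau>' < r"
  proof (rule ccontr)
    assume "\<not> \<tau>' < r"
    moreover have "r \<notin> {l'<..<r'}" "l + 1 \<notin> {l'<..<r'}"
      using band_excursion_avoids_boundary[OF exc'] band_excursionD(4,5)[OF exc] periodic_F by auto
    ultimately have "r \<le> l'" "r' \<le> l + 1"
      using \<tau>' k unfolding \<tau>'_def by auto
    then show False
      using disjoint_band_excursions[OF exc exc'] by simp
  qed
  then have "\<tau>' \<in> {l<..<r}"
    using k by (simp add: \<tau>'_def)
  then have "\<tau>' = \<sigma>"
    using inj_onD[OF inj_on_band_excursion[OF exc] \<open>F \<tau>' = F \<sigma>\<close>] \<sigma> by simp
  then have "\<tau> = \<sigma> + of_int (- k)"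
    by (simp add: \<tau>'_def)
  then show ?thesis ..
qed

end

theorem lemma2p1:
  fixes X :: "'a topology" and g :: "complex \<Rightarrow> 'a"
  assumes "peano_continuum X"
    and "continuous_map (top_of_set circle) X g"
    and "g ` circle = topspace X"
    and "\<And>A. closedin (top_of_set circle) A \<Longrightarrow> A \<subset> circle \<Longrightarrow> g ` A \<noteq> topspace X"
  shows "\<forall>x U. free_arc X U \<and> x \<in> U \<longrightarrow> (\<exists>!s. s \<in> circle \<and> g s = x)"
proof (intro allI impI, elim conjE)
  fix x U assume "free_arc X U" "x \<in> U"
  \<comment> \<open>only openness of the free arc is used, not its maximality\<close>
  then obtain h :: "'a \<Rightarrow> real"
    where U: "openin X U" "homeomorphic_map (subtopology X U) (top_of_set {0<..<1}) h"
    by (auto simp: free_arc_def open_arc_in_def homeomorphic_space)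
  interpret eulerian_lift_chart X "g \<circ> circle_param" U h
  proof
    show "continuous_map euclideanreal X (g \<circ> circle_param)"
      using continuous_map_compose[OF continuous_map_circle_param assms(2)] .
    show "range (g \<circ> circle_param) = topspace X"
      by (metis assms(3) image_comp range_circle_param)
    show "(g \<circ> circle_param) (t + 1) = (g \<circ> circle_param) t" for t
      using circle_param_add_int[of t 1] by simp
    show "eulerian_lift (g \<circ> circle_param)"
      using eulerian_lift_circle_param assms(3,4) by metis
    show "Hausdorff_space X"
      using assms(1) metrizable_imp_Hausdorff_space unfolding peano_continuum_def by blast
  qed (use U in auto)
  show "\<exists>!s. s \<in> circle \<and> g s = x"
  proof (rule ex_ex1I)
    show "\<exists>s. s \<in> circle \<and> g s = x"
      using \<open>x \<in> U\<close> U_subset_topspace assms(3) by (metis imageE subsetD)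
  next
    fix s t assume "s \<in> circle \<and> g s = x" "t \<in> circle \<and> g t = x"
    moreover obtain \<sigma> \<tau> where "s = circle_param \<sigma>" "t = circle_param \<tau>"
      using calculation circle_param_surj by metis
    ultimately obtain k :: int where "\<tau> = \<sigma> + of_int k"
      using same_value_in_U_imp_int_shift[of \<sigma> \<tau>] \<open>x \<in> U\<close> by auto
    then show "s = t"
      by (simp add: \<open>s = circle_param \<sigma>\<close> \<open>t = circle_param \<tau>\<close> circle_param_add_int)
  qed
qed

end
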